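(* Let $\mathbf{u}=(u_1,\dots,u_n)$ be the lazy voters' utility profile over a candidate set $C$, $|C|=m$, and let $\mathbf{a}^P=(a_{n+1},\dots,a_{n+s})$ be the principled voters' ballot profile. Then the game $G=(\mathcal{L},R^C,\mathbf{u},\mathbf{a}^P)$ admits a PNE $\mathbf{b}$ with $|W(\mathbf{b}+\mathbf{a}^P)|>1$ if and only if one of the following conditions holds: (1) each candidate is ranked first by at most one voter in $N\cup P$, and $\frac{1}{n+s}\sum_{i\in N\cup P}u_\ell(a_i)\ge\max_{i\in(N\cup P)\setminus\{\ell\}}u_\ell(a_i)$ for all $\ell\in N$; (2) there exist a set of candidates $X=\{c_{\ell_1},\dots,c_{\ell_k}\}$ with $k\ge2$, a positive integer $n'\le n$ with $n'/k\ge2$ such that $\mathrm{sc}(c,\mathbf{a}^P)<n'/k$ for each $c\notin X$, and a partition of the lazy voters into $k$ groups $N_1,\dots,N_k$ (some of which may be empty) such that (a) for each $j\in[k]$, $|N_j|+\mathrm{sc}(c_{\ell_j},\mathbf{a}^P)=n'/k$; (b) for each $j\in[k]$ and each $i\in N_j$, $c_{\ell_j}\succ_i c$ for all $c\in X\setminus\{c_{\ell_j}\}$; (c) for each $j\in[k]$ and each $i\in N_j$, $\frac{1}{k}\sum_{c\in X}u_i(c)\ge\max_{c\in X\setminus\{c_{\ell_j}\}}u_i(c)$; (d) for each $j\in[k]$, each $i\in N_j$, and each $c'\in C\setminus X$ with $\mathrm{sc}(c',\mathbf{a}^P)=n'/k-1$, $\frac{1}{k}\sum_{c\in X}u_i(c)\ge\frac{1}{k}\sum_{c\in(X\cup\{c'\})\setminus\{c_{\ell_j}\}}u_i(c)$.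 Moreover, if condition (1) holds then $G$ has a PNE where each lazy voter votes for her top candidate, and if condition (2) holds then $G$ has a PNE where each lazy voter votes for her top candidate in $X$. The game $G$ has no other PNE with two or more winners.
   Context: Let $C=\{c_1,\dots,c_m\}$ be candidates; $[k]=\{1,\dots,k\}$. There is a set $N=\{1,\dots,n\}$ of lazy voters and a set $P=\{n+1,\dots,n+s\}$ of principled voters. Every voter $i\in N\cup P$ has an injective utility function $u_i:C\to\mathbb{N}$ inducing $c\succ_i c'$ iff $u_i(c)>u_i(c')$, and top candidate $a_i$; $\mathbf{u}=(u_1,\dots,u_n)$. Principled voters are not players and always vote for their top candidate; their ballot vector is $\mathbf{a}^P=(a_{n+1},\dots,a_{n+s})$. A ballot vector of the lazy voters is $\mathbf{b}=(b_1,\dots,b_n)$, $b_i\in C\cup\{\bot\}$ ($\bot$ = abstain); $\mathbf{b}+\mathbf{a}^P$ is the combined ballot vector. For any ballot vector $\mathbf{x}$, $\mathrm{sc}(c,\mathbf{x})$ is the number of ballots for $c$ in $\mathbf{x}$ and $W(\mathbf{x})$ is the set of candidates of maximum score. Under $R^C$ the winner is chosen uniformly at random from $W(\mathbf{b}+\mathbf{a}^P)$; let $p_j(\mathbf{b})$ be the probability $c_j$ wins. Fix $0<\varepsilon<\min\{1/m,1/n\}$. Lazy voter $i$'s utility is $U_i(\mathbf{b})=\sum_jp_j(\mathbf{b})u_i(c_j)$ if $b_i\in C$ and that plus $\varepsilon$ if $b_i=\bot$. The game $(\mathcal{L},R^C,\mathbf{u},\mathbf{a}^P)$ has players $N$ with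 action sets $C\cup\{\bot\}$; a PNE is a $\mathbf{b}$ with $U_i(\mathbf{b})\ge U_i(\mathbf{b}_{-i},b')$ for all $i\in N$ and $b'\in C\cup\{\bot\}$, where $(\mathbf{b}_{-i},b')$ replaces $b_i$ by $b'$. *)

theory Defs
  imports Complex_Main
begin

(* A ballot of a lazy voter is a 'c option: Some c = vote for c, None = abstain (\<bottom>). *)

definition top_in :: "(nat \<Rightarrow> 'c \<Rightarrow> nat) \<Rightarrow> 'c set \<Rightarrow> nat \<Rightarrow> 'c" where
  "top_in u A i = (THE c. c \<in> A \<and> (\<forall>c'\<in>A. u i c' \<le> u i c))"


definition lazyN :: "nat \<Rightarrow> nat set" where "lazyN n = {1..n}"
definition princP :: "nat \<Rightarrow> nat \<Rightarrow> nat set" where "princP n s = {n+1..n+s}"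

definition scP :: "(nat \<Rightarrow> 'c \<Rightarrow> nat) \<Rightarrow> 'c set \<Rightarrow> nat \<Rightarrow> nat \<Rightarrow> 'c \<Rightarrow> nat" where
  "scP u C n s c = card {i \<in> princP n s. top_in u C i = c}"

definition sc :: "(nat \<Rightarrow> 'c \<Rightarrow> nat) \<Rightarrow> 'c set \<Rightarrow> nat \<Rightarrow> nat \<Rightarrow> (nat \<Rightarrow> 'c option) \<Rightarrow> 'c \<Rightarrow> nat" where
  "sc u C n s b c = card {i \<in> lazyN n. b i = Some c} + scP u C n s c"

definition winners :: "(nat \<Rightarrow> 'c \<Rightarrow> nat) \<Rightarrow> 'c set \<Rightarrow> nat \<Rightarrow> nat \<Rightarrow> (nat \<Rightarrow> 'c option) \<Rightarrow> 'c set" where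
  "winners u C n s b = {c \<in> C. \<forall>c'\<in>C. sc u C n s b c' \<le> sc u C n s b c}"

definition exp_util :: "(nat \<Rightarrow> 'c \<Rightarrow> nat) \<Rightarrow> 'c set \<Rightarrow> nat \<Rightarrow> nat \<Rightarrow> (nat \<Rightarrow> 'c option) \<Rightarrow> nat \<Rightarrow> real" where
  "exp_util u C n s b i =
     (\<Sum>c\<in>winners u C n s b. real (u i c)) / real (card (winners u C n s b))"

definition U :: "(nat \<Rightarrow> 'c \<Rightarrow> nat) \<Rightarrow> 'c set \<Rightarrow> nat \<Rightarrow> nat \<Rightarrow> real \<Rightarrow> (nat \<Rightarrow> 'c option) \<Rightarrow> nat \<Rightarrow> real" where
  "U u C n s \<epsilon> b i = exp_util u C n s b i + (if b i = None then \<epsilon> else 0)"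

definition ballots :: "'c set \<Rightarrow> 'c option set" where
  "ballots C = insert None (Some ` C)"

definition valid_profile :: "'c set \<Rightarrow> nat \<Rightarrow> (nat \<Rightarrow> 'c option) \<Rightarrow> bool" where
  "valid_profile C n b = (\<forall>i\<in>lazyN n. b i \<in> ballots C)"

definition is_PNE :: "(nat \<Rightarrow> 'c \<Rightarrow> nat) \<Rightarrow> 'c set \<Rightarrow> nat \<Rightarrow> nat \<Rightarrow> real \<Rightarrow> (nat \<Rightarrow> 'c option) \<Rightarrow> bool" where
  "is_PNE u C n s \<epsilon> b =
     (valid_profile C n b \<and>
      (\<forall>i\<in>lazyN n. \<forall>x\<in>ballots C. U u C n s \<epsilon> (b(i := x)) i \<le> U u C n s \<epsilon> b i))"

definition cond1 :: "(nat \<Rightarrow> 'c \<Rightarrow> nat) \<Rightarrow> 'c set \<Rightarrow> nat \<Rightarrow> nat \<Rightarrow> bool" where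
  "cond1 u C n s =
     ((\<forall>c\<in>C. card {i \<in> {1..n+s}. top_in u C i = c} \<le> 1) \<and>
      (\<forall>l\<in>lazyN n.
         (\<Sum>i\<in>{1..n+s}. real (u l (top_in u C i))) / real (n + s)
           \<ge> real (Max ((\<lambda>i. u l (top_in u C i)) ` ({1..n+s} - {l})))))"

(* Condition (2) for given data: X = {c_l1,...,c_lk} (k = card X), n', and the partition
   N_1..N_k of the lazy voters represented by an assignment g: voter i lies in the group
   N_j of candidate c_lj = g i (groups may be empty). *)
definition cond2_data :: "(nat \<Rightarrow> 'c \<Rightarrow> nat) \<Rightarrow> 'c set \<Rightarrow> nat \<Rightarrow> nat \<Rightarrow> 'c set \<Rightarrow> nat \<Rightarrow> (nat \<Rightarrow> 'c) \<Rightarrow> bool" where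
  "cond2_data u C n s X n' g =
     (let k = card X in
      X \<subseteq> C \<and> k \<ge> 2 \<and> 0 < n' \<and> n' \<le> n + s \<and> real n' / real k \<ge> 2 \<and>
      (\<forall>c\<in>C - X. real (scP u C n s c) < real n' / real k) \<and>
      (\<forall>i\<in>lazyN n. g i \<in> X) \<and>
      \<comment> \<open>(a)\<close>
      (\<forall>x\<in>X. real (card {i \<in> lazyN n. g i = x}) + real (scP u C n s x) = real n' / real k) \<and>
      \<comment> \<open>(b)\<close>
      (\<forall>i\<in>lazyN n. \<forall>c\<in>X - {g i}. u i (g i) > u i c) \<and>
      \<comment> \<open>(c)\<close>
      (\<forall>i\<in>lazyN n. (\<Sum>c\<in>X. real (u i c)) / real k \<ge> real (Max (u i ` (X - {g i})))) \<and>
      \<comment> \<open>(d)\<close>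
      (\<forall>i\<in>lazyN n. \<forall>c'\<in>C - X. real (scP u C n s c') = real n' / real k - 1 \<longrightarrow>
          (\<Sum>c\<in>X. real (u i c)) / real k \<ge> (\<Sum>c\<in>(insert c' X) - {g i}. real (u i c)) / real k))"

definition cond2 :: "(nat \<Rightarrow> 'c \<Rightarrow> nat) \<Rightarrow> 'c set \<Rightarrow> nat \<Rightarrow> nat \<Rightarrow> bool" where
  "cond2 u C n s = (\<exists>X n' g. cond2_data u C n s X n' g)"

end

theory Submission
  imports Defs
begin

text \<open>
Let W be the tied winners of an equilibrium, all at score t. Because \<open>\<epsilon> < 1/|W|\<close>, every lazy
voter votes for her favourite winner: otherwise switching to it would make it the unique winner,
gaining at least \<open>1/|W|\<close> over the average utility of W. For such profiles all deviations are
explicit: abstaining, or voting for a loser of score below \<open>t - 1\<close>, drops the voter's favourite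
from the tie; voting for another winner d makes d the unique winner; voting for a loser of score
\<open>t - 1\<close> swaps that loser into the tie in place of her favourite. Hence such a profile is an
equilibrium iff every lazy voter satisfies conditions (c) and (d). If \<open>t = 1\<close> the swap argument
forces every lazy voter's overall favourite into W, so all voters have distinct favourites and
condition (1) results; if \<open>t \<ge> 2\<close> one obtains condition (2) with X = W and \<open>n' = t |W|\<close>.
\<close>

section \<open>Favourite candidates and average utilities\<close>

lemma top_in_eqI:
  assumes "x \<in> A" and "\<forall>c\<in>A - {x}. u i c < u i x"
  shows "top_in u A i = x"
proof -
  have max: "x \<in> A \<and> (\<forall>c'\<in>A. u i c' \<le> u i x)"
    using assms by (metis DiffI less_imp_le order_refl singletonD)
  have "c = x" if "c \<in> A \<and> (\<forall>c'\<in>A. u i c' \<le> u i c)" for c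
    using that max assms(2) by (metis DiffI leD singletonD)
  then show ?thesis
    unfolding top_in_def using max by (intro the1_equality) blast+
qed

lemma top_in_strict_max:
  assumes "finite A" "A \<noteq> {}" "inj_on (u i) A"
  shows "top_in u A i \<in> A" and "\<And>c. c \<in> A \<Longrightarrow> c \<noteq> top_in u A i \<Longrightarrow> u i c < u i (top_in u A i)"
proof -
  have "Max (u i ` A) \<in> u i ` A"
    using assms(1,2) by (intro Max_in) auto
  then obtain x where x: "x \<in> A" "u i x = Max (u i ` A)"
    by auto
  have strict: "\<forall>c\<in>A - {x}. u i c < u i x"
  proof
    fix c assume c: "c \<in> A - {x}"
    then have "u i c \<le> u i x"
      using x assms(1) by simp
    moreover have "u i c \<noteq> u i x"
      using inj_onD[OF assms(3)] c x(1) by blast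
    ultimately show "u i c < u i x"
      by simp
  qed
  show "top_in u A i \<in> A" and "\<And>c. c \<in> A \<Longrightarrow> c \<noteq> top_in u A i \<Longrightarrow> u i c < u i (top_in u A i)"
    using top_in_eqI[of x A u i, OF x(1) strict] x(1) strict by auto
qed

abbreviation avg_util :: "(nat \<Rightarrow> 'c \<Rightarrow> nat) \<Rightarrow> 'c set \<Rightarrow> nat \<Rightarrow> real" where
  "avg_util u Y i \<equiv> (\<Sum>c\<in>Y. real (u i c)) / real (card Y)"

lemma sum_below_strict_max:
  fixes f :: "'c \<Rightarrow> nat"
  assumes "finite Y" "x \<in> Y" "\<forall>c\<in>Y - {x}. f c < f x"
  shows "(\<Sum>c\<in>Y - {x}. real (f c)) \<le> (real (card Y) - 1) * (real (f x) - 1)"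
proof -
  have "(\<Sum>c\<in>Y - {x}. real (f c)) \<le> (\<Sum>c\<in>Y - {x}. real (f x) - 1)"
    using assms(3) by (intro sum_mono) (force simp: nat_less_real_le)
  also have "\<dots> = (real (card Y) - 1) * (real (f x) - 1)"
    using assms(1,2) card_gt_0_iff[of Y] by (auto simp: card_Diff_singleton of_nat_diff)
  finally show ?thesis .
qed

lemma avg_plus_inverse_card_le_strict_max:
  fixes f :: "'c \<Rightarrow> nat"
  assumes "finite Y" "x \<in> Y" "card Y \<ge> 2" "\<forall>c\<in>Y - {x}. f c < f x"
  shows "(\<Sum>c\<in>Y. real (f c)) / real (card Y) + 1 / real (card Y) \<le> real (f x)"
proof -
  have "(\<Sum>c\<in>Y. real (f c)) + 1 \<le> real (card Y) * real (f x)"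
    using sum_below_strict_max[OF assms(1,2,4)] sum.remove[OF assms(1,2), of "\<lambda>c. real (f c)"] assms(3)
    by (simp add: algebra_simps)
  then show ?thesis
    using assms(3) by (simp add: field_simps)
qed

lemma avg_remove_strict_max:
  fixes f :: "'c \<Rightarrow> nat"
  assumes "finite Y" "x \<in> Y" "card Y \<ge> 2" "\<forall>c\<in>Y - {x}. f c < f x"
  shows "(\<Sum>c\<in>Y - {x}. real (f c)) / real (card (Y - {x})) + 1 / real (card Y)
           \<le> (\<Sum>c\<in>Y. real (f c)) / real (card Y)"
proof -
  define S where "S = (\<Sum>c\<in>Y - {x}. real (f c))"
  define K where "K = real (card Y)"
  have S: "S \<le> (K - 1) * (real (f x) - 1)" and K: "K \<ge> 2"
    using sum_below_strict_max[OF assms(1,2,4)] assms(3) by (simp_all add: S_def K_def)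
  have "K * (K + S + real (f x)) \<le> K * (1 + K * real (f x))"
    using S K by (intro mult_left_mono) (simp_all add: algebra_simps)
  then have "S / (K - 1) + 1 / K \<le> (real (f x) + S) / K"
    using K by (simp add: field_simps)
  moreover have "real (card (Y - {x})) = K - 1"
    using assms(1,2) card_gt_0_iff[of Y] by (auto simp: K_def card_Diff_singleton of_nat_diff)
  ultimately show ?thesis
    using sum.remove[OF assms(1,2), of "\<lambda>c. real (f c)"] by (simp add: S_def K_def)
qed

lemma avg_exchange:
  fixes f :: "'c \<Rightarrow> nat"
  assumes "finite Y" "x \<in> Y" "a \<notin> Y"
  shows "(\<Sum>c\<in>insert a Y - {x}. real (f c)) / real (card (insert a Y - {x}))
           = (\<Sum>c\<in>Y. real (f c)) / real (card Y) + (real (f a) - real (f x)) / real (card Y)"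
proof -
  have ax: "insert a Y - {x} = insert a (Y - {x})"
    using assms(2,3) by auto
  have "card (insert a Y - {x}) = card Y"
    using assms card_gt_0_iff[of Y] by (auto simp: ax card_Diff_singleton)
  moreover have "(\<Sum>c\<in>insert a Y - {x}. real (f c)) = (\<Sum>c\<in>Y. real (f c)) + (real (f a) - real (f x))"
    using assms sum.remove[OF assms(1,2), of "\<lambda>c. real (f c)"] by (simp add: ax)
  ultimately show ?thesis
    by (simp add: add_divide_distrib)
qed

lemma sum_card_fibres_le:
  assumes "finite A" "finite Y"
  shows "(\<Sum>y\<in>Y. card {x\<in>A. f x = y}) \<le> card A"
proof -
  have "(\<Sum>y\<in>Y. card {x\<in>A. f x = y}) = card (\<Union>y\<in>Y. {x\<in>A. f x = y})"
    using assms by (subst card_UN_disjoint) auto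
  also have "\<dots> \<le> card A"
    using assms by (intro card_mono) auto
  finally show ?thesis .
qed

section \<open>Scores and winners after a single deviation\<close>

locale game =
  fixes C :: "'c set" and u :: "nat \<Rightarrow> 'c \<Rightarrow> nat" and n s :: nat and \<epsilon> :: real
  assumes finite_C: "finite C" and C_nonempty: "C \<noteq> {}"
    and inj_utilities: "\<forall>i\<in>{1..n+s}. inj_on (u i) C"
    and two_voters: "n + s \<ge> 2"
    and eps_pos: "0 < \<epsilon>" and card_times_eps_less: "real (card C) * \<epsilon> < 1"
begin

abbreviation SC :: "(nat \<Rightarrow> 'c option) \<Rightarrow> 'c \<Rightarrow> nat" where
  "SC b c \<equiv> sc u C n s b c"

abbreviation WIN :: "(nat \<Rightarrow> 'c option) \<Rightarrow> 'c set" where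
  "WIN b \<equiv> winners u C n s b"

definition max_score :: "(nat \<Rightarrow> 'c option) \<Rightarrow> nat" where
  "max_score b = Max (SC b ` C)"

lemma lazy_voter: "i \<in> lazyN n \<Longrightarrow> i \<in> {1..n+s}"
  by (simp add: lazyN_def)

lemma top_in_voter:
  assumes "i \<in> {1..n+s}" "A \<subseteq> C" "A \<noteq> {}"
  shows "top_in u A i \<in> A" and "\<And>c. c \<in> A \<Longrightarrow> c \<noteq> top_in u A i \<Longrightarrow> u i c < u i (top_in u A i)"
  using top_in_strict_max[OF finite_subset[OF assms(2) finite_C] assms(3)]
    inj_on_subset[OF bspec[OF inj_utilities assms(1)] assms(2)] by auto

lemma max_score_ge: "c \<in> C \<Longrightarrow> SC b c \<le> max_score b"
  by (simp add: max_score_def finite_C)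

lemma in_winners_iff: "c \<in> WIN b \<longleftrightarrow> c \<in> C \<and> SC b c = max_score b"
proof -
  have "max_score b \<in> SC b ` C"
    unfolding max_score_def using finite_C C_nonempty by (intro Max_in) auto
  then obtain w where w: "w \<in> C" "SC b w = max_score b"
    by auto
  have "(\<forall>c'\<in>C. SC b c' \<le> SC b c) \<longleftrightarrow> SC b c = max_score b" if "c \<in> C"
    using max_score_ge[of _ b] w that by (metis le_antisym)
  then show ?thesis
    unfolding winners_def by auto
qed

lemma winners_subset: "WIN b \<subseteq> C"
  by (auto simp: winners_def)

lemma finite_winners: "finite (WIN b)"
  using finite_subset[OF winners_subset finite_C] .

lemma winners_eqI:
  assumes "Y \<subseteq> C" "Y \<noteq> {}" "\<forall>c\<in>Y. SC b c = t" "\<forall>c\<in>C - Y. SC b c < t"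
  shows "WIN b = Y" and "max_score b = t"
proof -
  show max: "max_score b = t"
    unfolding max_score_def using assms finite_C
    by (intro Max_eqI) (auto intro: less_imp_le)
  show "WIN b = Y"
  proof (intro set_eqI)
    fix c
    show "c \<in> WIN b \<longleftrightarrow> c \<in> Y"
      using assms max unfolding in_winners_iff by (metis DiffI less_irrefl subsetD)
  qed
qed

lemma eps_less_inverse_card:
  assumes "Y \<subseteq> C" "Y \<noteq> {}"
  shows "\<epsilon> < 1 / real (card Y)"
proof -
  have "0 < card Y"
    using assms finite_subset[OF assms(1) finite_C] by (simp add: card_gt_0_iff)
  have "real (card Y) * \<epsilon> \<le> real (card C) * \<epsilon>"
    using card_mono[OF finite_C assms(1)] eps_pos by (intro mult_right_mono) simp_all
  then have "real (card Y) * \<epsilon> < 1"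
    using card_times_eps_less by linarith
  then show ?thesis
    using \<open>0 < card Y\<close> by (simp add: field_simps)
qed

lemma U_eq: "U u C n s \<epsilon> b i = avg_util u (WIN b) i + (if b i = None then \<epsilon> else 0)"
  by (simp add: U_def exp_util_def)

lemma sc_fun_upd:
  assumes "i \<in> lazyN n"
  shows "SC (b(i := x)) c + (if b i = Some c then 1 else 0) = SC b c + (if x = Some c then 1 else 0)"
proof -
  let ?A = "{j \<in> lazyN n - {i}. b j = Some c}"
  have "finite ?A"
    by (rule finite_subset[of _ "lazyN n"]) (auto simp: lazyN_def)
  moreover have "{j \<in> lazyN n. (b(i := x)) j = Some c} = (if x = Some c then insert i ?A else ?A)"
    and "{j \<in> lazyN n. b j = Some c} = (if b i = Some c then insert i ?A else ?A)"
    using assms by auto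
  ultimately show ?thesis
    unfolding sc_def by auto
qed

lemma sc_fun_upd_other:
  "i \<in> lazyN n \<Longrightarrow> b i \<noteq> Some c \<Longrightarrow> x \<noteq> Some c \<Longrightarrow> SC (b(i := x)) c = SC b c"
  using sc_fun_upd[of i b x c] by simp

lemma sc_sincere:
  assumes "\<forall>j\<in>lazyN n. b j = Some (g j)"
  shows "SC b c = card {j \<in> lazyN n. g j = c} + scP u C n s c"
proof -
  have "{j \<in> lazyN n. b j = Some c} = {j \<in> lazyN n. g j = c}"
    using assms by auto
  then show ?thesis
    by (simp add: sc_def)
qed

lemma sc_sincere_not_voted:
  assumes "\<forall>j\<in>lazyN n. b j = Some (g j)" "\<forall>j\<in>lazyN n. g j \<in> X" "c \<notin> X"
  shows "SC b c = scP u C n s c"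
proof -
  have empty: "{j \<in> lazyN n. g j = c} = {}"
    using assms(2,3) by auto
  show ?thesis
    unfolding sc_sincere[OF assms(1)] empty by simp
qed

lemma sum_sc_sincere_le:
  assumes "\<forall>j\<in>lazyN n. b j = Some (g j)" "finite Y"
  shows "(\<Sum>c\<in>Y. SC b c) \<le> n + s"
proof -
  have "(\<Sum>c\<in>Y. SC b c) = (\<Sum>c\<in>Y. card {j \<in> lazyN n. g j = c}) + (\<Sum>c\<in>Y. scP u C n s c)"
    by (simp add: sc_sincere[OF assms(1)] sum.distrib)
  also have "\<dots> \<le> n + s"
    using sum_card_fibres_le[of "lazyN n" Y g] sum_card_fibres_le[of "princP n s" Y "top_in u C"]
      assms(2) by (simp add: lazyN_def princP_def scP_def)
  finally show ?thesis .
qed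

lemma winners_vote_for_winner:
  assumes i: "i \<in> lazyN n" and d: "d \<in> WIN b" and bi: "b i \<noteq> Some d"
  shows "WIN (b(i := Some d)) = {d}"
proof (rule winners_eqI)
  show "{d} \<subseteq> C" "{d} \<noteq> {}"
    using d winners_subset by auto
  show "\<forall>c\<in>{d}. SC (b(i := Some d)) c = max_score b + 1"
    using sc_fun_upd[OF i, of b "Some d" d] bi d by (simp add: in_winners_iff)
  show "\<forall>c\<in>C - {d}. SC (b(i := Some d)) c < max_score b + 1"
  proof
    fix c assume c: "c \<in> C - {d}"
    then have "SC (b(i := Some d)) c \<le> SC b c"
      using sc_fun_upd[OF i, of b "Some d" c] by (auto split: if_splits)
    then show "SC (b(i := Some d)) c < max_score b + 1"
      using max_score_ge[of c b] c by simp
  qed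
qed

lemma winners_withdraw:
  assumes i: "i \<in> lazyN n" and bi: "b i = Some a" and a: "a \<in> WIN b" and two: "card (WIN b) \<ge> 2"
    and x: "\<forall>d. x = Some d \<longrightarrow> d \<notin> WIN b \<and> SC b d + 1 < max_score b"
  shows "WIN (b(i := x)) = WIN b - {a}"
proof (rule winners_eqI)
  show "WIN b - {a} \<subseteq> C"
    using winners_subset by blast
  have "card (WIN b - {a}) \<ge> 1"
    using two a finite_winners by (simp add: card_Diff_singleton)
  then show "WIN b - {a} \<noteq> {}"
    by (metis card.empty not_one_le_zero)
  show "\<forall>c\<in>WIN b - {a}. SC (b(i := x)) c = max_score b"
  proof
    fix c assume c: "c \<in> WIN b - {a}"
    then have "x \<noteq> Some c" and "b i \<noteq> Some c"
      using x bi by auto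
    then show "SC (b(i := x)) c = max_score b"
      using sc_fun_upd_other[OF i] c by (simp add: in_winners_iff)
  qed
  show "\<forall>c\<in>C - (WIN b - {a}). SC (b(i := x)) c < max_score b"
  proof
    fix c assume c: "c \<in> C - (WIN b - {a})"
    show "SC (b(i := x)) c < max_score b"
    proof (cases "c = a")
      case True
      have "x \<noteq> Some a"
        using x a by blast
      then show ?thesis
        using sc_fun_upd[OF i, of b x a] True bi a by (simp add: in_winners_iff)
    next
      case False
      then have "SC b c < max_score b"
        using c max_score_ge[of c b] by (auto simp: in_winners_iff)
      then show ?thesis
        using sc_fun_upd[OF i, of b x c] bi x False by (auto split: if_splits)
    qed
  qed
qed

lemma winners_exchange:
  assumes i: "i \<in> lazyN n" and bi: "b i = Some a" and a: "a \<in> WIN b"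
    and d: "d \<in> C - WIN b" and sd: "SC b d + 1 = max_score b"
  shows "WIN (b(i := Some d)) = insert d (WIN b) - {a}"
proof (rule winners_eqI)
  show "insert d (WIN b) - {a} \<subseteq> C" "insert d (WIN b) - {a} \<noteq> {}"
    using a d winners_subset by auto
  show "\<forall>c\<in>insert d (WIN b) - {a}. SC (b(i := Some d)) c = max_score b"
  proof
    fix c assume c: "c \<in> insert d (WIN b) - {a}"
    show "SC (b(i := Some d)) c = max_score b"
    proof (cases "c = d")
      case True
      then show ?thesis
        using sc_fun_upd[OF i, of b "Some d" d] bi c sd by simp
    next
      case False
      then show ?thesis
        using sc_fun_upd_other[OF i, of b c "Some d"] bi c by (auto simp: in_winners_iff)
    qed
  qed
  show "\<forall>c\<in>C - (insert d (WIN b) - {a}). SC (b(i := Some d)) c < max_score b"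
  proof
    fix c assume c: "c \<in> C - (insert d (WIN b) - {a})"
    show "SC (b(i := Some d)) c < max_score b"
    proof (cases "c = a")
      case True
      then show ?thesis
        using sc_fun_upd[OF i, of b "Some d" a] bi a d by (auto simp: in_winners_iff split: if_splits)
    next
      case False
      then have "SC b c < max_score b"
        using c max_score_ge[of c b] by (auto simp: in_winners_iff)
      then show ?thesis
        using sc_fun_upd_other[OF i] bi c False by auto
    qed
  qed
qed

lemma top_winner:
  assumes "i \<in> lazyN n" "card (WIN b) \<ge> 2"
  shows "top_in u (WIN b) i \<in> WIN b" and "\<forall>c\<in>WIN b - {top_in u (WIN b) i}. u i c < u i (top_in u (WIN b) i)"
proof -
  have "WIN b \<noteq> {}"
    using assms(2) by auto
  then show "top_in u (WIN b) i \<in> WIN b" and "\<forall>c\<in>WIN b - {top_in u (WIN b) i}. u i c < u i (top_in u (WIN b) i)"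
    using top_in_voter[OF lazy_voter[OF assms(1)] winners_subset] by auto
qed

section \<open>Equilibria with tied winners\<close>

lemma PNE_votes_top_winner:
  assumes pne: "is_PNE u C n s \<epsilon> b" and two: "card (WIN b) \<ge> 2" and i: "i \<in> lazyN n"
  shows "b i = Some (top_in u (WIN b) i)"
proof (rule ccontr)
  let ?a = "top_in u (WIN b) i"
  assume bi: "b i \<noteq> Some ?a"
  have a: "?a \<in> WIN b"
    using top_winner[OF i two] by blast
  have "U u C n s \<epsilon> (b(i := Some ?a)) i = real (u i ?a)"
    using winners_vote_for_winner[OF i a bi] by (simp add: U_eq)
  moreover have "avg_util u (WIN b) i + 1 / real (card (WIN b)) \<le> real (u i ?a)"
    using avg_plus_inverse_card_le_strict_max[OF finite_winners a two] top_winner[OF i two] by simp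
  moreover have "\<epsilon> < 1 / real (card (WIN b))"
    using eps_less_inverse_card[OF winners_subset] a by blast
  moreover have "U u C n s \<epsilon> b i \<le> avg_util u (WIN b) i + \<epsilon>"
    using eps_pos by (simp add: U_eq)
  moreover have "U u C n s \<epsilon> (b(i := Some ?a)) i \<le> U u C n s \<epsilon> b i"
    using pne i a winners_subset by (auto simp: is_PNE_def ballots_def)
  ultimately show False
    by linarith
qed

text \<open>Conditions (c) and (d) for voter i, with X the tied winners and \<open>g i\<close> her favourite in X.\<close>

definition stable_in_tie :: "(nat \<Rightarrow> 'c option) \<Rightarrow> nat \<Rightarrow> bool" where
  "stable_in_tie b i \<longleftrightarrow>
     real (Max (u i ` (WIN b - {top_in u (WIN b) i}))) \<le> avg_util u (WIN b) i \<and>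
     (\<forall>d\<in>C - WIN b. SC b d + 1 = max_score b \<longrightarrow>
        avg_util u (insert d (WIN b) - {top_in u (WIN b) i}) i \<le> avg_util u (WIN b) i)"

lemma stable_in_tie_if_no_profitable_deviation:
  assumes i: "i \<in> lazyN n" and two: "card (WIN b) \<ge> 2" and bi: "b i = Some (top_in u (WIN b) i)"
    and dev: "\<forall>x\<in>ballots C. U u C n s \<epsilon> (b(i := x)) i \<le> U u C n s \<epsilon> b i"
  shows "stable_in_tie b i"
proof -
  let ?W = "WIN b" and ?a = "top_in u (WIN b) i"
  have a: "?a \<in> ?W"
    using top_winner[OF i two] by blast
  have Ub: "U u C n s \<epsilon> b i = avg_util u ?W i"
    using bi by (simp add: U_eq)
  have dev_to: "U u C n s \<epsilon> (b(i := Some d)) i \<le> avg_util u ?W i" if "d \<in> C" for d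
  proof -
    have "Some d \<in> ballots C"
      using that by (simp add: ballots_def)
    then show ?thesis
      using dev Ub by simp
  qed
  have "card (?W - {?a}) \<ge> 1"
    using two a finite_winners by (simp add: card_Diff_singleton)
  then have "?W - {?a} \<noteq> {}"
    by (metis card.empty not_one_le_zero)
  then have "Max (u i ` (?W - {?a})) \<in> u i ` (?W - {?a})"
    using finite_winners by (intro Max_in) auto
  then obtain d where d: "d \<in> ?W - {?a}" and du: "Max (u i ` (?W - {?a})) = u i d"
    by blast
  have "WIN (b(i := Some d)) = {d}"
    using winners_vote_for_winner[OF i, of d b] d bi by auto
  then have "U u C n s \<epsilon> (b(i := Some d)) i = real (u i d)"
    by (simp add: U_eq)
  then have "real (Max (u i ` (?W - {?a}))) \<le> avg_util u ?W i"
    using dev_to[of d] d winners_subset du by force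
  moreover have "avg_util u (insert d ?W - {?a}) i \<le> avg_util u ?W i"
    if "d \<in> C - ?W" "SC b d + 1 = max_score b" for d
  proof -
    have "U u C n s \<epsilon> (b(i := Some d)) i = avg_util u (insert d ?W - {?a}) i"
      using winners_exchange[OF i bi a that] by (simp add: U_eq)
    then show ?thesis
      using dev_to[of d] that by simp
  qed
  ultimately show ?thesis
    by (simp add: stable_in_tie_def)
qed

lemma deviation_cases:
  assumes i: "i \<in> lazyN n" and two: "card (WIN b) \<ge> 2" and bi: "b i = Some a" and a: "a \<in> WIN b"
    and x: "x \<in> ballots C"
  obtains (stay) "x = Some a"
    | (to_winner) d where "x = Some d" "d \<in> WIN b - {a}" "WIN (b(i := x)) = {d}"
    | (withdraw) "WIN (b(i := x)) = WIN b - {a}"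
    | (exchange) d where "x = Some d" "d \<in> C - WIN b" "SC b d + 1 = max_score b"
        "WIN (b(i := x)) = insert d (WIN b) - {a}"
proof -
  from x consider "x = None" | d where "x = Some d" "d \<in> C"
    by (auto simp: ballots_def)
  then show thesis
  proof cases
    case 1
    then show thesis
      using withdraw winners_withdraw[OF i bi a two] by simp
  next
    case (2 d)
    consider "d = a" | "d \<in> WIN b - {a}" | "d \<in> C - WIN b"
      using 2 by blast
    then show thesis
    proof cases
      case 1
      then show thesis
        using stay 2 by simp
    next
      case 2
      then show thesis
        using to_winner \<open>x = Some d\<close> winners_vote_for_winner[OF i, of d b] bi by auto
    next
      case out: 3
      then have "SC b d + 1 \<le> max_score b"
        using max_score_ge[of d b] by (auto simp: in_winners_iff)
      then consider "SC b d + 1 < max_score b" | "SC b d + 1 = max_score b"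
        by linarith
      then show thesis
      proof cases
        case 1
        then show thesis
          using withdraw winners_withdraw[OF i bi a two] out \<open>x = Some d\<close> by simp
      next
        case 2
        then show thesis
          using exchange[OF \<open>x = Some d\<close> out 2] winners_exchange[OF i bi a out 2] \<open>x = Some d\<close> by simp
      qed
    qed
  qed
qed

lemma no_profitable_deviation_if_stable_in_tie:
  assumes i: "i \<in> lazyN n" and two: "card (WIN b) \<ge> 2" and bi: "b i = Some (top_in u (WIN b) i)"
    and stable: "stable_in_tie b i" and x: "x \<in> ballots C"
  shows "U u C n s \<epsilon> (b(i := x)) i \<le> U u C n s \<epsilon> b i"
proof -
  let ?W = "WIN b" and ?a = "top_in u (WIN b) i"
  have a: "?a \<in> ?W"
    using top_winner[OF i two] by blast
  have Ub: "U u C n s \<epsilon> b i = avg_util u ?W i"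
    using bi by (simp add: U_eq)
  from i two bi a x show ?thesis
  proof (cases rule: deviation_cases)
    case stay
    then have "b(i := x) = b"
      using bi by (simp add: fun_upd_idem)
    then show ?thesis
      by simp
  next
    case (to_winner d)
    then have "U u C n s \<epsilon> (b(i := x)) i = real (u i d)"
      by (simp add: U_eq)
    moreover have "u i d \<le> Max (u i ` (?W - {?a}))"
      using to_winner finite_winners by (intro Max_ge) auto
    ultimately show ?thesis
      using stable Ub unfolding stable_in_tie_def by linarith
  next
    case withdraw
    have "avg_util u (?W - {?a}) i + 1 / real (card ?W) \<le> avg_util u ?W i"
      using avg_remove_strict_max[OF finite_winners a two] top_winner[OF i two] by simp
    moreover have "\<epsilon> < 1 / real (card ?W)"
      using eps_less_inverse_card[OF winners_subset] a by blast
    moreover have "U u C n s \<epsilon> (b(i := x)) i \<le> avg_util u (?W - {?a}) i + \<epsilon>"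
      using withdraw eps_pos by (simp add: U_eq)
    ultimately show ?thesis
      using Ub by linarith
  next
    case (exchange d)
    then show ?thesis
      using stable Ub unfolding stable_in_tie_def by (simp add: U_eq)
  qed
qed

lemma is_PNE_iff_stable_in_tie:
  assumes two: "card (WIN b) \<ge> 2" and sincere: "\<forall>i\<in>lazyN n. b i = Some (top_in u (WIN b) i)"
  shows "is_PNE u C n s \<epsilon> b \<longleftrightarrow> (\<forall>i\<in>lazyN n. stable_in_tie b i)"
proof -
  have "valid_profile C n b"
    unfolding valid_profile_def ballots_def using sincere top_winner(1)[OF _ two] winners_subset by (blast intro: imageI)
  then show ?thesis
    unfolding is_PNE_def using two sincere
      stable_in_tie_if_no_profitable_deviation no_profitable_deviation_if_stable_in_tie by blast
qed

lemma max_score_pos: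
  assumes "\<forall>i\<in>lazyN n. b i \<in> Some ` C"
  shows "1 \<le> max_score b"
proof (cases "n = 0")
  case False
  then have one: "1 \<in> lazyN n"
    by (simp add: lazyN_def)
  then obtain c where c: "c \<in> C" "b 1 = Some c"
    using assms by blast
  have "finite {j \<in> lazyN n. b j = Some c}"
    by (simp add: lazyN_def)
  then have "1 \<le> card {j \<in> lazyN n. b j = Some c}"
    using one c(2) card_gt_0_iff[of "{j \<in> lazyN n. b j = Some c}"] by fastforce
  then show ?thesis
    using max_score_ge[OF c(1), of b] by (simp add: sc_def)
next
  case True
  let ?c = "top_in u C (n + 1)"
  have voter: "n + 1 \<in> princP n s"
    using True two_voters by (simp add: princP_def)
  then have c: "?c \<in> C"
    using top_in_voter[of "n + 1" C] C_nonempty by (simp add: princP_def)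
  have "finite {j \<in> princP n s. top_in u C j = ?c}"
    by (simp add: princP_def)
  then have "1 \<le> scP u C n s ?c"
    using voter card_gt_0_iff[of "{j \<in> princP n s. top_in u C j = ?c}"] by (fastforce simp: scP_def)
  then show ?thesis
    using max_score_ge[OF c, of b] by (simp add: sc_def)
qed

section \<open>Conditions (1) and (2)\<close>

lemma top_in_C: "j \<in> {1..n+s} \<Longrightarrow> top_in u C j \<in> C"
  using top_in_voter(1)[of j C] C_nonempty by simp

lemma sc_sincere_all:
  assumes "\<forall>j\<in>lazyN n. b j = Some (top_in u C j)"
  shows "SC b c = card {j \<in> {1..n+s}. top_in u C j = c}"
proof -
  have "{j \<in> {1..n+s}. top_in u C j = c}
          = {j \<in> lazyN n. top_in u C j = c} \<union> {j \<in> princP n s. top_in u C j = c}"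
    by (auto simp: lazyN_def princP_def)
  moreover have "{j \<in> lazyN n. top_in u C j = c} \<inter> {j \<in> princP n s. top_in u C j = c} = {}"
    by (auto simp: lazyN_def princP_def)
  ultimately show ?thesis
    using sc_sincere[OF assms] by (simp add: card_Un_disjoint lazyN_def princP_def scP_def)
qed

lemma inj_on_top_in_if_distinct:
  assumes distinct: "\<forall>c\<in>C. card {j \<in> {1..n+s}. top_in u C j = c} \<le> 1"
  shows "inj_on (top_in u C) {1..n+s}"
proof (rule inj_onI)
  fix j j' assume j: "j \<in> {1..n+s}" "j' \<in> {1..n+s}" "top_in u C j = top_in u C j'"
  then have "card {k \<in> {1..n+s}. top_in u C k = top_in u C j} \<le> Suc 0"
    using distinct top_in_C by simp
  then show "j = j'"
    using j by (subst (asm) card_le_Suc0_iff_eq) auto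
qed

lemma distinct_tops:
  assumes distinct: "\<forall>c\<in>C. card {j \<in> {1..n+s}. top_in u C j = c} \<le> 1"
    and sincere: "\<forall>j\<in>lazyN n. b j = Some (top_in u C j)"
  shows "inj_on (top_in u C) {1..n+s}" and "WIN b = top_in u C ` {1..n+s}"
    and "card (WIN b) = n + s" and "\<And>l. l \<in> lazyN n \<Longrightarrow> top_in u (WIN b) l = top_in u C l"
proof -
  let ?T = "top_in u C ` {1..n+s}"
  show inj: "inj_on (top_in u C) {1..n+s}"
    using inj_on_top_in_if_distinct[OF distinct] .
  have score: "SC b c = (if c \<in> ?T then 1 else 0)" if "c \<in> C" for c
  proof (cases "c \<in> ?T")
    case True
    then have "{k \<in> {1..n+s}. top_in u C k = c} \<noteq> {}"
      by auto
    then have "card {k \<in> {1..n+s}. top_in u C k = c} \<noteq> 0"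
      by simp
    then show ?thesis
      using True distinct that sc_sincere_all[OF sincere, of c] by fastforce
  next
    case False
    then have "{k \<in> {1..n+s}. top_in u C k = c} = {}"
      by auto
    then show ?thesis
      using False sc_sincere_all[OF sincere, of c] by simp
  qed
  have "?T \<subseteq> C" "?T \<noteq> {}"
    using top_in_C two_voters by auto
  moreover have "\<forall>c\<in>?T. SC b c = 1" and "\<forall>c\<in>C - ?T. SC b c < 1"
    using score top_in_C by auto
  ultimately show win: "WIN b = ?T"
    using winners_eqI[of ?T b 1] by blast
  show card: "card (WIN b) = n + s"
    using win card_image[OF inj] by simp
  fix l assume l: "l \<in> lazyN n"
  have "top_in u C l \<in> WIN b"
    using win lazy_voter[OF l] by simp
  then show "top_in u (WIN b) l = top_in u C l"
    using top_in_voter(2)[OF lazy_voter[OF l] order_refl C_nonempty] winners_subset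
    by (intro top_in_eqI) auto
qed

lemma cond1_iff_stable_in_tie:
  assumes distinct: "\<forall>c\<in>C. card {j \<in> {1..n+s}. top_in u C j = c} \<le> 1"
    and sincere: "\<forall>j\<in>lazyN n. b j = Some (top_in u C j)"
  shows "cond1 u C n s \<longleftrightarrow> (\<forall>l\<in>lazyN n. stable_in_tie b l)"
proof -
  let ?top = "top_in u C"
  note inj = distinct_tops(1)[OF assms] and win = distinct_tops(2)[OF assms]
    and card = distinct_tops(3)[OF assms] and top_win = distinct_tops(4)[OF assms]
  have "stable_in_tie b l \<longleftrightarrow>
          real (Max ((\<lambda>i. u l (?top i)) ` ({1..n+s} - {l})))
            \<le> (\<Sum>i\<in>{1..n+s}. real (u l (?top i))) / real (n + s)"
    if l: "l \<in> lazyN n" for l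
  proof -
    have top: "?top l \<in> WIN b"
      using win lazy_voter[OF l] by simp
    have avg: "avg_util u (WIN b) l = (\<Sum>i\<in>{1..n+s}. real (u l (?top i))) / real (n + s)"
      using win card sum.reindex[OF inj, of "\<lambda>c. real (u l c)"] by simp
    have "WIN b - {top_in u (WIN b) l} = ?top ` ({1..n+s} - {l})"
      using win top_win[OF l] inj lazy_voter[OF l] by (simp add: inj_on_image_set_diff)
    then have others: "u l ` (WIN b - {top_in u (WIN b) l}) = (\<lambda>i. u l (?top i)) ` ({1..n+s} - {l})"
      by (simp add: image_image)
    have "avg_util u (insert d (WIN b) - {top_in u (WIN b) l}) l \<le> avg_util u (WIN b) l"
      if "d \<in> C - WIN b" for d
    proof -
      have "u l d < u l (?top l)"
        using top_in_voter(2)[OF lazy_voter[OF l] order_refl C_nonempty] that top by blast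
      then have "(real (u l d) - real (u l (?top l))) / real (card (WIN b)) \<le> 0"
        by (intro divide_nonpos_nonneg) simp_all
      then show ?thesis
        using avg_exchange[OF finite_winners top, of d "u l"] that top_win[OF l] by simp
    qed
    then show ?thesis
      unfolding stable_in_tie_def using avg others by auto
  qed
  then show ?thesis
    unfolding cond1_def using distinct by auto
qed

lemma PNE_if_cond1:
  assumes "cond1 u C n s"
  shows "is_PNE u C n s \<epsilon> (\<lambda>i. Some (top_in u C i))" and "card (WIN (\<lambda>i. Some (top_in u C i))) \<ge> 2"
proof -
  let ?b = "\<lambda>i. Some (top_in u C i)"
  have distinct: "\<forall>c\<in>C. card {j \<in> {1..n+s}. top_in u C j = c} \<le> 1"
    using assms by (simp add: cond1_def)
  have sincere: "\<forall>j\<in>lazyN n. ?b j = Some (top_in u C j)"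
    by simp
  show two: "card (WIN ?b) \<ge> 2"
    using distinct_tops(3)[OF distinct sincere] two_voters by simp
  have "\<forall>i\<in>lazyN n. ?b i = Some (top_in u (WIN ?b) i)"
    using distinct_tops(4)[OF distinct sincere] by simp
  then show "is_PNE u C n s \<epsilon> ?b"
    using is_PNE_iff_stable_in_tie[OF two] cond1_iff_stable_in_tie[OF distinct sincere] assms by simp
qed

lemma PNE_max_score_one_votes_top:
  assumes pne: "is_PNE u C n s \<epsilon> b" and two: "card (WIN b) \<ge> 2" and one: "max_score b = 1"
    and l: "l \<in> lazyN n"
  shows "b l = Some (top_in u C l)"
proof -
  let ?a = "top_in u C l" and ?w = "top_in u (WIN b) l"
  have bl: "b l = Some ?w"
    using PNE_votes_top_winner[OF pne two l] .
  have a: "?a \<in> C" and a_max: "\<forall>c\<in>C - {?a}. u l c < u l ?a"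
    using top_in_voter[OF lazy_voter[OF l] order_refl C_nonempty] by auto
  have w: "?w \<in> WIN b"
    using top_winner[OF l two] by blast
  show ?thesis
  proof (cases "?a \<in> WIN b")
    case True
    then have "?w = ?a"
      using a_max winners_subset by (intro top_in_eqI) auto
    then show ?thesis
      using bl by simp
  next
    case False
    have "\<forall>i\<in>lazyN n. b i = Some (top_in u (WIN b) i)"
      using PNE_votes_top_winner[OF pne two] by blast
    then have "stable_in_tie b l"
      using is_PNE_iff_stable_in_tie[OF two] pne l by blast
    moreover have "SC b ?a + 1 = max_score b"
      using False a one max_score_ge[OF a, of b] by (auto simp: in_winners_iff)
    ultimately have "avg_util u (insert ?a (WIN b) - {?w}) l \<le> avg_util u (WIN b) l"
      using a False by (auto simp: stable_in_tie_def)
    moreover have "?w \<in> C - {?a}"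
      using w winners_subset False by auto
    then have "0 < (real (u l ?a) - real (u l ?w)) / real (card (WIN b))"
      using a_max two by (intro divide_pos_pos) auto
    ultimately show ?thesis
      using avg_exchange[OF finite_winners w False, of "u l"] by simp
  qed
qed

lemma cond1_if_PNE_max_score_one:
  assumes pne: "is_PNE u C n s \<epsilon> b" and two: "card (WIN b) \<ge> 2" and one: "max_score b = 1"
  shows "cond1 u C n s" and "\<forall>i\<in>lazyN n. b i = Some (top_in u C i)"
proof -
  show sincere: "\<forall>i\<in>lazyN n. b i = Some (top_in u C i)"
    using PNE_max_score_one_votes_top[OF pne two one] by blast
  have "\<forall>i\<in>lazyN n. b i = Some (top_in u (WIN b) i)"
    using PNE_votes_top_winner[OF pne two] by blast
  then have stable: "\<forall>i\<in>lazyN n. stable_in_tie b i"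
    using is_PNE_iff_stable_in_tie[OF two] pne by blast
  have distinct: "\<forall>c\<in>C. card {j \<in> {1..n+s}. top_in u C j = c} \<le> 1"
    using sc_sincere_all[OF sincere] max_score_ge one by metis
  show "cond1 u C n s"
    using cond1_iff_stable_in_tie[OF distinct sincere] stable by simp
qed

lemma stable_in_tie_iff_cond2_conditions:
  assumes i: "i \<in> lazyN n" and two: "card (WIN b) \<ge> 2"
    and score: "real (max_score b) = real n' / real (card (WIN b))"
    and losers: "\<forall>c\<in>C - WIN b. SC b c = scP u C n s c"
  shows "stable_in_tie b i \<longleftrightarrow>
     (\<Sum>c\<in>WIN b. real (u i c)) / real (card (WIN b)) \<ge> real (Max (u i ` (WIN b - {top_in u (WIN b) i}))) \<and>
     (\<forall>c'\<in>C - WIN b. real (scP u C n s c') = real n' / real (card (WIN b)) - 1 \<longrightarrow>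
        (\<Sum>c\<in>WIN b. real (u i c)) / real (card (WIN b))
          \<ge> (\<Sum>c\<in>insert c' (WIN b) - {top_in u (WIN b) i}. real (u i c)) / real (card (WIN b)))"
proof -
  have a: "top_in u (WIN b) i \<in> WIN b"
    using top_winner[OF i two] by blast
  have "card (insert c' (WIN b) - {top_in u (WIN b) i}) = card (WIN b)" if "c' \<in> C - WIN b" for c'
    using that a finite_winners card_gt_0_iff[of "WIN b"] by (auto simp: card_Diff_singleton)
  moreover have "SC b c' + 1 = max_score b \<longleftrightarrow> real (scP u C n s c') = real n' / real (card (WIN b)) - 1"
    if "c' \<in> C - WIN b" for c'
    using that losers score by (simp add: of_nat_eq_iff[symmetric] del: of_nat_eq_iff) linarith
  ultimately show ?thesis
    unfolding stable_in_tie_def by auto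
qed

lemma winners_if_cond2_data:
  assumes "cond2_data u C n s X n' g"
  shows "\<And>i. i \<in> lazyN n \<Longrightarrow> top_in u X i = g i" and "WIN (\<lambda>i. Some (top_in u X i)) = X"
    and "real (max_score (\<lambda>i. Some (top_in u X i))) = real n' / real (card X)"
    and "\<forall>c\<in>C - X. SC (\<lambda>i. Some (top_in u X i)) c = scP u C n s c"
proof -
  let ?b = "\<lambda>i. Some (top_in u X i)"
  have XC: "X \<subseteq> C" and two: "card X \<ge> 2"
    and losers: "\<forall>c\<in>C - X. real (scP u C n s c) < real n' / real (card X)"
    and gX: "\<forall>i\<in>lazyN n. g i \<in> X"
    and cond_a: "\<forall>x\<in>X. real (card {i \<in> lazyN n. g i = x}) + real (scP u C n s x) = real n' / real (card X)"
    and cond_b: "\<forall>i\<in>lazyN n. \<forall>c\<in>X - {g i}. u i (g i) > u i c"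
    using assms unfolding cond2_data_def Let_def by blast+
  show g_top: "top_in u X i = g i" if "i \<in> lazyN n" for i
    using gX cond_b that by (intro top_in_eqI) auto
  then have sincere: "\<forall>j\<in>lazyN n. ?b j = Some (g j)"
    by simp
  show no_lazy: "\<forall>c\<in>C - X. SC ?b c = scP u C n s c"
    using sc_sincere_not_voted[OF sincere gX] by blast
  have "X \<noteq> {}"
    using two by auto
  then obtain x0 where x0: "x0 \<in> X"
    by blast
  define t where "t = SC ?b x0"
  have t: "real t = real n' / real (card X)"
    using cond_a x0 sc_sincere[OF sincere] by (simp add: t_def)
  have "\<forall>c\<in>X. SC ?b c = t"
  proof
    fix c assume "c \<in> X"
    then have "real (SC ?b c) = real t"
      using cond_a t sc_sincere[OF sincere, of c] by simp
    then show "SC ?b c = t"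
      by linarith
  qed
  moreover have "\<forall>c\<in>C - X. SC ?b c < t"
    using losers t no_lazy by (metis of_nat_less_iff)
  ultimately have "WIN ?b = X" and "max_score ?b = t"
    using winners_eqI[OF XC \<open>X \<noteq> {}\<close>] by blast+
  then show "WIN ?b = X" and "real (max_score ?b) = real n' / real (card X)"
    using t by simp_all
qed

lemma PNE_if_cond2_data:
  assumes "cond2_data u C n s X n' g"
  shows "is_PNE u C n s \<epsilon> (\<lambda>i. Some (top_in u X i))" and "card (WIN (\<lambda>i. Some (top_in u X i))) \<ge> 2"
proof -
  let ?b = "\<lambda>i. Some (top_in u X i)"
  note g_top = winners_if_cond2_data(1)[OF assms] and win = winners_if_cond2_data(2)[OF assms]
  have cond_cd: "\<forall>i\<in>lazyN n. (\<Sum>c\<in>X. real (u i c)) / real (card X) \<ge> real (Max (u i ` (X - {g i}))) \<and>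
        (\<forall>c'\<in>C - X. real (scP u C n s c') = real n' / real (card X) - 1 \<longrightarrow>
          (\<Sum>c\<in>X. real (u i c)) / real (card X) \<ge> (\<Sum>c\<in>insert c' X - {g i}. real (u i c)) / real (card X))"
    using assms unfolding cond2_data_def Let_def by blast
  show two: "card (WIN ?b) \<ge> 2"
    using assms win by (simp add: cond2_data_def Let_def)
  have score: "real (max_score ?b) = real n' / real (card (WIN ?b))"
    using winners_if_cond2_data(3)[OF assms] win by simp
  have losers: "\<forall>c\<in>C - WIN ?b. SC ?b c = scP u C n s c"
    using winners_if_cond2_data(4)[OF assms] win by simp
  have "stable_in_tie ?b i" if i: "i \<in> lazyN n" for i
    using stable_in_tie_iff_cond2_conditions[OF i two score losers] cond_cd i g_top[OF i] win by simp
  then show "is_PNE u C n s \<epsilon> ?b"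
    using is_PNE_iff_stable_in_tie[OF two] win by simp
qed

lemma cond2_data_if_PNE_max_score_two:
  assumes pne: "is_PNE u C n s \<epsilon> b" and two: "card (WIN b) \<ge> 2" and t2: "max_score b \<ge> 2"
  shows "cond2_data u C n s (WIN b) (card (WIN b) * max_score b) (top_in u (WIN b))"
proof -
  let ?W = "WIN b" and ?t = "max_score b" and ?g = "top_in u (WIN b)"
  have sincere: "\<forall>i\<in>lazyN n. b i = Some (?g i)"
    using PNE_votes_top_winner[OF pne two] by blast
  have stable: "\<forall>i\<in>lazyN n. stable_in_tie b i"
    using is_PNE_iff_stable_in_tie[OF two sincere] pne by blast
  have g_win: "\<forall>i\<in>lazyN n. ?g i \<in> ?W"
    using top_winner(1)[OF _ two] by blast
  have losers: "\<forall>c\<in>C - ?W. SC b c = scP u C n s c"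
    using sc_sincere_not_voted[OF sincere g_win] by blast
  have ratio: "real (card ?W * ?t) / real (card ?W) = real ?t"
    using two by simp
  have "card ?W * ?t = (\<Sum>c\<in>?W. SC b c)"
    by (simp add: in_winners_iff)
  then have bound: "card ?W * ?t \<le> n + s"
    using sum_sc_sincere_le[OF sincere finite_winners] by simp
  show ?thesis
    unfolding cond2_data_def Let_def
  proof (intro conjI)
    show "?W \<subseteq> C" "2 \<le> card ?W" "0 < card ?W * ?t" "card ?W * ?t \<le> n + s"
      using winners_subset two t2 bound by auto
    show "2 \<le> real (card ?W * ?t) / real (card ?W)"
      using ratio t2 by simp
    show "\<forall>c\<in>C - ?W. real (scP u C n s c) < real (card ?W * ?t) / real (card ?W)"
    proof
      fix c assume c: "c \<in> C - ?W"
      then have "SC b c < ?t"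
        using max_score_ge[of c b] by (auto simp: in_winners_iff)
      then show "real (scP u C n s c) < real (card ?W * ?t) / real (card ?W)"
        using ratio losers c by simp
    qed
    show "\<forall>i\<in>lazyN n. ?g i \<in> ?W"
      by (rule g_win)
    show "\<forall>x\<in>?W. real (card {i \<in> lazyN n. ?g i = x}) + real (scP u C n s x)
                  = real (card ?W * ?t) / real (card ?W)"
      using ratio sc_sincere[OF sincere] by (simp add: in_winners_iff flip: of_nat_add)
    show "\<forall>i\<in>lazyN n. \<forall>c\<in>?W - {?g i}. u i c < u i (?g i)"
      using top_winner(2)[OF _ two] by blast
    have "real (max_score b) = real (card ?W * ?t) / real (card ?W)"
      using ratio by simp
    note cond2_conditions = stable_in_tie_iff_cond2_conditions[OF _ two this losers]
    show "\<forall>i\<in>lazyN n. real (Max (u i ` (?W - {?g i}))) \<le> (\<Sum>c\<in>?W. real (u i c)) / real (card ?W)"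
      using stable cond2_conditions by blast
    show "\<forall>i\<in>lazyN n. \<forall>c'\<in>C - ?W. real (scP u C n s c') = real (card ?W * ?t) / real (card ?W) - 1 \<longrightarrow>
            (\<Sum>c\<in>insert c' ?W - {?g i}. real (u i c)) / real (card ?W) \<le> (\<Sum>c\<in>?W. real (u i c)) / real (card ?W)"
      using stable cond2_conditions by blast
  qed
qed

lemma cond1_or_cond2_if_PNE:
  assumes pne: "is_PNE u C n s \<epsilon> b" and two: "card (WIN b) > 1"
  shows "(cond1 u C n s \<and> (\<forall>i\<in>lazyN n. b i = Some (top_in u C i)))
          \<or> (\<exists>X n' g. cond2_data u C n s X n' g \<and> (\<forall>i\<in>lazyN n. b i = Some (top_in u X i)))"
proof -
  have two: "card (WIN b) \<ge> 2"
    using two by simp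
  have sincere: "\<forall>i\<in>lazyN n. b i = Some (top_in u (WIN b) i)"
    using PNE_votes_top_winner[OF pne two] by blast
  then have "1 \<le> max_score b"
    using top_winner(1)[OF _ two] winners_subset by (intro max_score_pos) blast
  then consider "max_score b = 1" | "max_score b \<ge> 2"
    by linarith
  then show ?thesis
  proof cases
    case 1
    then show ?thesis
      using cond1_if_PNE_max_score_one[OF pne two] by blast
  next
    case 2
    then show ?thesis
      using cond2_data_if_PNE_max_score_two[OF pne two] sincere by blast
  qed
qed

end

theorem proposition8:
  fixes C :: "'c set" and u :: "nat \<Rightarrow> 'c \<Rightarrow> nat" and n s :: nat and \<epsilon> :: real
  assumes "finite C" and "C \<noteq> {}"
    and "\<forall>i\<in>{1..n+s}. inj_on (u i) C"
    and "n + s \<ge> 2"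
    and "0 < \<epsilon>" and "real (card C) * \<epsilon> < 1" and "real n * \<epsilon> < 1"
  shows "((\<exists>b. is_PNE u C n s \<epsilon> b \<and> card (winners u C n s b) > 1)
            \<longleftrightarrow> (cond1 u C n s \<or> cond2 u C n s))
     \<and> (cond1 u C n s \<longrightarrow> is_PNE u C n s \<epsilon> (\<lambda>i. Some (top_in u C i)))
     \<and> (\<forall>X n' g. cond2_data u C n s X n' g \<longrightarrow> is_PNE u C n s \<epsilon> (\<lambda>i. Some (top_in u X i)))
     \<and> (\<forall>b. is_PNE u C n s \<epsilon> b \<and> card (winners u C n s b) > 1 \<longrightarrow>
          (cond1 u C n s \<and> (\<forall>i\<in>lazyN n. b i = Some (top_in u C i)))
          \<or> (\<exists>X n' g. cond2_data u C n s X n' g \<and> (\<forall>i\<in>lazyN n. b i = Some (top_in u X i))))"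
proof -
  interpret game C u n s \<epsilon>
    using assms by unfold_locales auto
  have sufficient1: "is_PNE u C n s \<epsilon> (\<lambda>i. Some (top_in u C i)) \<and> card (WIN (\<lambda>i. Some (top_in u C i))) > 1"
    if "cond1 u C n s"
    using PNE_if_cond1[OF that] by simp
  have sufficient2: "is_PNE u C n s \<epsilon> (\<lambda>i. Some (top_in u X i)) \<and> card (WIN (\<lambda>i. Some (top_in u X i))) > 1"
    if "cond2_data u C n s X n' g" for X n' g
    using PNE_if_cond2_data[OF that] by simp
  show ?thesis
    using sufficient1 sufficient2 cond1_or_cond2_if_PNE unfolding cond2_def by blast
qed

end
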